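(* Let $\tilde\beta\subseteq\mathcal{N}$ satisfy, for each $c\in\mathcal{C}$, $|\tilde\beta\cap\mathcal{N}_c|=v_c+1$ if $|\mathcal{N}_c|>v_c$ and $|\tilde\beta\cap\mathcal{N}_c|=0$ otherwise. If $(B,\beta_1,\ldots,\beta_B)$ is a feasible solution of problem (RO-$\Sigma$), then for every $\sigma\in\Sigma$ at least one of the following holds: (i) there exist $b\in\{1,\ldots,B\}$ and $c\in\mathcal{C}$ with $|\{\sigma(j)\in\beta_b: j\in\mathcal{N}_c\}|>v_c$; (ii) $T^\sigma(\beta_1,\ldots,\beta_B,\tilde\beta)\neq T^*(\beta_1,\ldots,\beta_B,\tilde\beta)$.
   Context: A ballot style consists of contests $\mathcal{C}=\{1,\ldots,C\}$, candidates $\mathcal{N}=\{1,\ldots,N\}$ partitioned into nonempty sets $\mathcal{N}_c$ ($c\in\mathcal{C}$), and positive integers $v_c$. A filled-out ballot is a subset $\beta\subseteq\mathcal{N}$; $\mathscr{B}=\{\beta\subseteq\mathcal{N}: |\mathcal{N}_c\cap\beta|\le v_c\ \forall c\}$. For any deck of subsets and $i\in\mathcal{N}_c$: $T^*_i(\beta_1,\ldots,\beta_B)=\sum_{b=1}^B\mathbb{I}\{i\in\beta_b\text{ and }|\mathcal{N}_c\cap\beta_b|\le v_c\}$, and for a bijection $\sigma$ of $\mathcal{N}$, $T^\sigma_i(\beta_1,\ldots,\beta_B)=\sum_{b=1}^B\mathbb{I}\{\sigma(i)\in\beta_b\text{ and }|\{\sigma(j)\in\beta_b: j\in\mathcal{N}_c\}|\le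 v_c\}$. $\Sigma$ is the set of non-identity bijections $\mathcal{N}\to\mathcal{N}$. Problem (RO-$\Sigma$): minimize $B$ over $B\in\mathbb{N}$ and $\beta_1,\ldots,\beta_B\in\mathscr{B}$ subject to $T^\sigma(\beta_1,\ldots,\beta_B)\neq T^*(\beta_1,\ldots,\beta_B)$ for all $\sigma\in\Sigma$. *)

theory Defs
  imports Main
begin

text \<open>Candidates are 1..N, contests are 1..C; con i is the contest of candidate i,
  v c the number of votes allowed in contest c. Ballots are indexed 0..B-1 in a list.\<close>

definition cands :: "nat \<Rightarrow> (nat \<Rightarrow> nat) \<Rightarrow> nat \<Rightarrow> nat set" where
  "cands N con c = {i \<in> {1..N}. con i = c}"

definition ballot_style :: "nat \<Rightarrow> nat \<Rightarrow> (nat \<Rightarrow> nat) \<Rightarrow> (nat \<Rightarrow> nat) \<Rightarrow> bool" where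
  "ballot_style C N con v \<longleftrightarrow> (\<forall>i\<in>{1..N}. con i \<in> {1..C})
     \<and> (\<forall>c\<in>{1..C}. cands N con c \<noteq> {} \<and> v c > 0)"

definition valid_ballots :: "nat \<Rightarrow> nat \<Rightarrow> (nat \<Rightarrow> nat) \<Rightarrow> (nat \<Rightarrow> nat) \<Rightarrow> nat set set" where
  "valid_ballots C N con v = {\<beta>. \<beta> \<subseteq> {1..N} \<and> (\<forall>c\<in>{1..C}. card (cands N con c \<inter> \<beta>) \<le> v c)}"

definition Tstar :: "nat \<Rightarrow> (nat \<Rightarrow> nat) \<Rightarrow> (nat \<Rightarrow> nat) \<Rightarrow> nat set list \<Rightarrow> nat \<Rightarrow> nat" where
  "Tstar N con v \<beta>s i = card {b. b < length \<beta>s \<and> i \<in> \<beta>s ! b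
      \<and> card (cands N con (con i) \<inter> \<beta>s ! b) \<le> v (con i)}"

definition Tsig :: "nat \<Rightarrow> (nat \<Rightarrow> nat) \<Rightarrow> (nat \<Rightarrow> nat) \<Rightarrow> (nat \<Rightarrow> nat) \<Rightarrow> nat set list \<Rightarrow> nat \<Rightarrow> nat" where
  "Tsig N con v \<sigma> \<beta>s i = card {b. b < length \<beta>s \<and> \<sigma> i \<in> \<beta>s ! b
      \<and> card {\<sigma> j | j. j \<in> cands N con (con i) \<and> \<sigma> j \<in> \<beta>s ! b} \<le> v (con i)}"

definition tallies_differ :: "nat \<Rightarrow> (nat \<Rightarrow> nat) \<Rightarrow> (nat \<Rightarrow> nat) \<Rightarrow> (nat \<Rightarrow> nat) \<Rightarrow> nat set list \<Rightarrow> bool" where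
  "tallies_differ N con v \<sigma> \<beta>s \<longleftrightarrow> (\<exists>i\<in>{1..N}. Tsig N con v \<sigma> \<beta>s i \<noteq> Tstar N con v \<beta>s i)"

definition Sigma_perms :: "nat \<Rightarrow> (nat \<Rightarrow> nat) set" where
  "Sigma_perms N = {\<sigma>. bij_betw \<sigma> {1..N} {1..N} \<and> (\<exists>i\<in>{1..N}. \<sigma> i \<noteq> i)}"

text \<open>Feasibility for (RO-Sigma): B = length of the list.\<close>
definition RO_feasible :: "nat \<Rightarrow> nat \<Rightarrow> (nat \<Rightarrow> nat) \<Rightarrow> (nat \<Rightarrow> nat) \<Rightarrow> nat set list \<Rightarrow> bool" where
  "RO_feasible C N con v \<beta>s \<longleftrightarrow> set \<beta>s \<subseteq> valid_ballots C N con v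
     \<and> (\<forall>\<sigma>\<in>Sigma_perms N. tallies_differ N con v \<sigma> \<beta>s)"

end

theory Submission
  imports Defs
begin

text \<open>If \<sigma> overvotes no contest of the deck, both tallies on the deck are raw appearance
  counts, so equal tallies on the deck extended by \<open>\<beta>t\<close> give \<open>g (\<sigma> i) \<le> g i\<close> for the appearance
  count \<open>g\<close>: \<open>\<beta>t\<close> adds nothing to \<open>T*\<close>, as each of its contests is empty or overvoted, and
  nothing negative to \<open>T\<^sup>\<sigma>\<close>. Since \<sigma> permutes the candidates, the two sums of \<open>g\<close> agree, forcing
  \<open>g \<circ> \<sigma> = g\<close>; then \<open>T\<^sup>\<sigma> = T*\<close> on the deck itself, contradicting feasibility.\<close>

definition appearances :: "nat set list \<Rightarrow> nat \<Rightarrow> nat" where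
  "appearances \<beta>s j = card {b. b < length \<beta>s \<and> j \<in> \<beta>s ! b}"

lemma card_indices_snoc:
  "card {b. b < length (xs @ [y]) \<and> P ((xs @ [y]) ! b)}
     = card {b. b < length xs \<and> P (xs ! b)} + (if P y then 1 else 0)"
proof -
  have "{b. b < length (xs @ [y]) \<and> P ((xs @ [y]) ! b)}
      = {b. b < length xs \<and> P (xs ! b)} \<union> (if P y then {length xs} else {})"
    by (auto simp: nth_append less_Suc_eq)
  then show ?thesis by (simp add: card_insert_if)
qed

lemma Tstar_snoc:
  "Tstar N con v (\<beta>s @ [\<beta>]) i = Tstar N con v \<beta>s i
     + (if i \<in> \<beta> \<and> card (cands N con (con i) \<inter> \<beta>) \<le> v (con i) then 1 else 0)"
  unfolding Tstar_def by (rule card_indices_snoc)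

lemma Tsig_le_Tsig_snoc: "Tsig N con v \<sigma> \<beta>s i \<le> Tsig N con v \<sigma> (\<beta>s @ [\<beta>]) i"
  unfolding Tsig_def
  using card_indices_snoc[where P = "\<lambda>X. \<sigma> i \<in> X \<and>
      card {\<sigma> j | j. j \<in> cands N con (con i) \<and> \<sigma> j \<in> X} \<le> v (con i)"]
  by simp

lemma Tstar_eq_appearances:
  assumes "set \<beta>s \<subseteq> valid_ballots C N con v" and "con i \<in> {1..C}"
  shows "Tstar N con v \<beta>s i = appearances \<beta>s i"
proof -
  have "card (cands N con (con i) \<inter> \<beta>s ! b) \<le> v (con i)" if "b < length \<beta>s" for b
    using assms that nth_mem by (fastforce simp: valid_ballots_def)
  then show ?thesis
    unfolding Tstar_def appearances_def by (metis (lifting))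
qed

lemma Tsig_eq_appearances:
  assumes "\<And>b. b < length \<beta>s \<Longrightarrow>
             card {\<sigma> j | j. j \<in> cands N con (con i) \<and> \<sigma> j \<in> \<beta>s ! b} \<le> v (con i)"
  shows "Tsig N con v \<sigma> \<beta>s i = appearances \<beta>s (\<sigma> i)"
  unfolding Tsig_def appearances_def using assms by (metis (lifting))

lemma Tstar_snoc_overvoted:
  assumes "i \<in> cands N con c"
    and "card (\<beta> \<inter> cands N con c) = (if card (cands N con c) > v c then v c + 1 else 0)"
  shows "Tstar N con v (\<beta>s @ [\<beta>]) i = Tstar N con v \<beta>s i"
proof -
  have "finite (\<beta> \<inter> cands N con c)" by (simp add: cands_def)
  then have "i \<in> \<beta> \<Longrightarrow> card (\<beta> \<inter> cands N con c) > 0"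
    using assms(1) card_gt_0_iff by blast
  moreover have "con i = c" using assms(1) by (simp add: cands_def)
  ultimately show ?thesis
    using assms(2) by (auto simp: Tstar_snoc Int_commute split: if_splits)
qed

lemma permutation_pointwise_le_imp_eq:
  fixes g :: "'a \<Rightarrow> 'b::ordered_cancel_comm_monoid_add"
  assumes "bij_betw \<sigma> A A" "finite A" "\<And>i. i \<in> A \<Longrightarrow> g (\<sigma> i) \<le> g i" "i \<in> A"
  shows "g (\<sigma> i) = g i"
proof -
  have "sum (g \<circ> \<sigma>) A = sum g A"
    using sum.reindex_bij_betw[OF assms(1)] by simp
  then have "(g \<circ> \<sigma>) i = g i"
    using assms(2-4) by (intro sum_mono_inv[of "g \<circ> \<sigma>" A g]) auto
  then show ?thesis by simp
qed

theorem proposition8: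
  fixes C N :: nat and con v :: "nat \<Rightarrow> nat" and \<beta>s :: "nat set list" and \<beta>t :: "nat set"
  assumes style: "ballot_style C N con v"
    and bt_sub: "\<beta>t \<subseteq> {1..N}"
    and bt_card: "\<forall>c\<in>{1..C}. card (\<beta>t \<inter> cands N con c) =
                     (if card (cands N con c) > v c then v c + 1 else 0)"
    and feas: "RO_feasible C N con v \<beta>s"
  shows "\<forall>\<sigma>\<in>Sigma_perms N.
           (\<exists>b < length \<beta>s. \<exists>c\<in>{1..C}. card {\<sigma> j | j. j \<in> cands N con c \<and> \<sigma> j \<in> \<beta>s ! b} > v c)
         \<or> tallies_differ N con v \<sigma> (\<beta>s @ [\<beta>t])"
proof (intro ballI disjCI, rule ccontr)
  fix \<sigma> assume \<sigma>: "\<sigma> \<in> Sigma_perms N"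
  assume "\<not> tallies_differ N con v \<sigma> (\<beta>s @ [\<beta>t])"
  then have extended_eq: "Tsig N con v \<sigma> (\<beta>s @ [\<beta>t]) i = Tstar N con v (\<beta>s @ [\<beta>t]) i"
    if "i \<in> {1..N}" for i
    using that by (simp add: tallies_differ_def)
  assume "\<not> (\<exists>b < length \<beta>s. \<exists>c\<in>{1..C}. card {\<sigma> j | j. j \<in> cands N con c \<and> \<sigma> j \<in> \<beta>s ! b} > v c)"
  then have no_overvote: "\<And>b c. b < length \<beta>s \<Longrightarrow> c \<in> {1..C} \<Longrightarrow>
      card {\<sigma> j | j. j \<in> cands N con c \<and> \<sigma> j \<in> \<beta>s ! b} \<le> v c"
    by (meson not_le)
  have valid: "set \<beta>s \<subseteq> valid_ballots C N con v" using feas by (simp add: RO_feasible_def)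
  have con: "con i \<in> {1..C}" "i \<in> cands N con (con i)" if "i \<in> {1..N}" for i
    using style that by (simp_all add: ballot_style_def cands_def)
  have Tsig: "Tsig N con v \<sigma> \<beta>s i = appearances \<beta>s (\<sigma> i)" if "i \<in> {1..N}" for i
    using no_overvote con(1)[OF that] by (intro Tsig_eq_appearances)
  have Tstar: "Tstar N con v \<beta>s i = appearances \<beta>s i" if "i \<in> {1..N}" for i
    using Tstar_eq_appearances[OF valid con(1)[OF that]] .
  have "appearances \<beta>s (\<sigma> i) \<le> appearances \<beta>s i" if i: "i \<in> {1..N}" for i
    using Tsig_le_Tsig_snoc[of N con v \<sigma> \<beta>s i \<beta>t] Tsig[OF i] Tstar[OF i] extended_eq[OF i]
      Tstar_snoc_overvoted[where con = con and c = "con i" and v = v and \<beta>s = \<beta>s,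
        OF con(2)[OF i] bt_card[rule_format, OF con(1)[OF i]]]
    by simp
  moreover have "bij_betw \<sigma> {1..N} {1..N}" using \<sigma> by (simp add: Sigma_perms_def)
  ultimately have "appearances \<beta>s (\<sigma> i) = appearances \<beta>s i" if "i \<in> {1..N}" for i
    using permutation_pointwise_le_imp_eq[OF _ finite_atLeastAtMost] that by blast
  then have "\<not> tallies_differ N con v \<sigma> \<beta>s"
    by (simp add: tallies_differ_def Tsig Tstar)
  then show False using feas \<sigma> by (simp add: RO_feasible_def)
qed

end
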